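(* Let $B\in M_{Q_0}(\mathbb Z)$ be skew-symmetrizable and $G$ a group of permutations of $Q_0$. Let $(A,\mathbf x)$ be a $G$-invariant seed in $\mathcal A(B)$, with $A=(a_{ij})$ and $\mathbf x=(x_i)_{i\in Q_0}$. Let $\Omega=\{i_1,\ldots,i_n\}$ be a $G$-orbit and $(A^{(n)},\mathbf x^{(n)})=\mu_{i_n}\circ\cdots\circ\mu_{i_1}(A,\mathbf x)$. Then for every $i\in Q_0$, $$x^{(n)}_i=\begin{cases}x_i&\text{if } i\notin\Omega,\\[2pt] \dfrac{\prod_{a_{j,i_k}>0}x_j^{a_{j,i_k}}+\prod_{a_{j,i_k}<0}x_j^{-a_{j,i_k}}}{x_{i_k}}&\text{if } i=i_k \text{ for some } k.\end{cases}$$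
   Context: Skew-symmetrizable: $DB$ skew-symmetric for a positive integer diagonal $D$. Mutation of matrices: $\mu_k(M)=(m'_{ij})$ with $m'_{ij}=-m_{ij}$ if $k\in\{i,j\}$, else $m_{ij}+\tfrac12(|m_{ik}|m_{kj}+m_{ik}|m_{kj}|)$; of seeds: $\mu_k(M,\mathbf y)=(\mu_k(M),\mathbf y')$ with $y'_i=y_i$ ($i\neq k$), $y_ky'_k=\prod_{m_{ik}>0}y_i^{m_{ik}}+\prod_{m_{ik}<0}y_i^{-m_{ik}}$. $\mathcal A(B)=\mathcal A(B,\mathbf u)$ is the cluster algebra with initial seed $(B,\mathbf u)$, $\mathbf u=(u_i)_{i\in Q_0}$ indeterminates; its seeds are those obtained from $(B,\mathbf u)$ by finite sequences of mutations. $G$ acts on $\mathbb Z[\mathbf u^{\pm1}]$ by $gu_i=u_{gi}$. A permutation group $G$ is an admissible automorphism group of a matrix $S=(s_{ij})$ (and $(S,G)$ an admissible pair) if $s_{gi,gj}=s_{ij}$ for all $g,i,j$ and for distinct $i,j$ in the same $G$-orbit there is no path of length $1$ or $2$ from $i$ to $j$ in the quiver of $S$ ($s_{ij}\le0$ and no $k$ with $s_{ik}>0$, $s_{kj}>0$). A seed $(S,\mathbf x)$ of $\mathcal A(B)$ is $G$-invariant if $gx_i=x_{gi}$ for all $g\in G$, $i\in Q_0$, and $(S,G)$ is an admissible pair. *)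

theory Defs
  imports "HOL-Library.Poly_Mapping" "HOL-Computational_Algebra.Fraction_Field"
begin

text \<open>The ambient field of the cluster algebra is the field of
  rational functions Q(u_i : i in Q_0), realised as the fraction field of the integer
  polynomial ring Z[u_i : i in Q_0] (polynomials as poly_mappings from monomials to int).\<close>

type_synonym 'q ratfun = "(('q \<Rightarrow>\<^sub>0 nat) \<Rightarrow>\<^sub>0 int) fract"

definition skew_symmetrizable :: "('q::finite \<Rightarrow> 'q \<Rightarrow> int) \<Rightarrow> bool" where
  "skew_symmetrizable B \<longleftrightarrow>
     (\<exists>D::'q \<Rightarrow> int. (\<forall>i. D i > 0) \<and> (\<forall>i j. D i * B i j = - (D j * B j i)))"

text \<open>Matrix mutation (note |a| b + a |b| is always even).\<close>
definition mut_mat :: "'q \<Rightarrow> ('q \<Rightarrow> 'q \<Rightarrow> int) \<Rightarrow> ('q \<Rightarrow> 'q \<Rightarrow> int)" where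
  "mut_mat k M = (\<lambda>i j. if k = i \<or> k = j then - M i j
      else M i j + (\<bar>M i k\<bar> * M k j + M i k * \<bar>M k j\<bar>) div 2)"

definition exch :: "('q::finite \<Rightarrow> 'q \<Rightarrow> int) \<Rightarrow> ('q \<Rightarrow> 'a::field) \<Rightarrow> 'q \<Rightarrow> 'a" where
  "exch M y k = (\<Prod>i\<in>{i. M i k > 0}. y i ^ nat (M i k)) + (\<Prod>i\<in>{i. M i k < 0}. y i ^ nat (- M i k))"

definition mut_seed :: "'q::finite \<Rightarrow> ('q \<Rightarrow> 'q \<Rightarrow> int) \<times> ('q \<Rightarrow> 'a::field)
    \<Rightarrow> ('q \<Rightarrow> 'q \<Rightarrow> int) \<times> ('q \<Rightarrow> 'a)" where
  "mut_seed k S = (mut_mat k (fst S),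
     (\<lambda>i. if i = k then exch (fst S) (snd S) k / snd S k else snd S i))"

definition uvar :: "'q::linorder \<Rightarrow> 'q ratfun" where
  "uvar i = Fract (Poly_Mapping.single (Poly_Mapping.single i 1) 1) 1"

inductive_set seeds :: "('q::{finite,linorder} \<Rightarrow> 'q \<Rightarrow> int)
     \<Rightarrow> (('q \<Rightarrow> 'q \<Rightarrow> int) \<times> ('q \<Rightarrow> 'q ratfun)) set" for B where
  init: "(B, uvar) \<in> seeds B"
| mut: "S \<in> seeds B \<Longrightarrow> mut_seed k S \<in> seeds B"

definition peval :: "('q \<Rightarrow> 'a::comm_ring_1) \<Rightarrow> (('q \<Rightarrow>\<^sub>0 nat) \<Rightarrow>\<^sub>0 int) \<Rightarrow> 'a" where
  "peval f p = (\<Sum>m\<in>Poly_Mapping.keys p.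
      of_int (Poly_Mapping.lookup p m) * (\<Prod>i\<in>Poly_Mapping.keys m. f i ^ Poly_Mapping.lookup m i))"

text \<open>Action of a permutation g on the field of rational functions: the field
  automorphism with g u_i = u_{g i}.\<close>
definition gact :: "('q::linorder \<Rightarrow> 'q) \<Rightarrow> 'q ratfun \<Rightarrow> 'q ratfun" where
  "gact g x = (THE y. \<exists>p q. q \<noteq> 0 \<and> x = Fract p q \<and>
       y = peval (\<lambda>i. uvar (g i)) p / peval (\<lambda>i. uvar (g i)) q)"

definition perm_group :: "('q \<Rightarrow> 'q) set \<Rightarrow> bool" where
  "perm_group G \<longleftrightarrow> (\<forall>g\<in>G. bij g) \<and> id \<in> G \<and> (\<forall>g\<in>G. \<forall>h\<in>G. g \<circ> h \<in> G)
      \<and> (\<forall>g\<in>G. inv g \<in> G)"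

definition orbit_of :: "('q \<Rightarrow> 'q) set \<Rightarrow> 'q \<Rightarrow> 'q set" where
  "orbit_of G i = {g i | g. g \<in> G}"

definition admissible :: "('q \<Rightarrow> 'q \<Rightarrow> int) \<Rightarrow> ('q \<Rightarrow> 'q) set \<Rightarrow> bool" where
  "admissible S G \<longleftrightarrow> (\<forall>g\<in>G. \<forall>i j. S (g i) (g j) = S i j) \<and>
     (\<forall>i j. i \<noteq> j \<and> j \<in> orbit_of G i \<longrightarrow> S i j \<le> 0 \<and> \<not> (\<exists>k. S i k > 0 \<and> S k j > 0))"

definition G_invariant_seed :: "('q::{finite,linorder} \<Rightarrow> 'q \<Rightarrow> int) \<Rightarrow> ('q \<Rightarrow> 'q) set
    \<Rightarrow> ('q \<Rightarrow> 'q \<Rightarrow> int) \<Rightarrow> ('q \<Rightarrow> 'q ratfun) \<Rightarrow> bool" where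
  "G_invariant_seed B G S x \<longleftrightarrow> (S, x) \<in> seeds B \<and>
     (\<forall>g\<in>G. \<forall>i. gact g (x i) = x (g i)) \<and> admissible S G"

end

theory Submission
  imports Defs
begin

text \<open>Since the seed is reachable from the skew-symmetrizable matrix B, the matrix A is
  skew-symmetrizable, so its entries a_ij and a_ji have opposite signs.  Admissibility forbids
  arrows inside the orbit \<Omega>, hence A vanishes on \<Omega> \<times> \<Omega>.  Mutating at a vertex k of \<Omega> then
  leaves the columns of the other orbit vertices unchanged and changes only the cluster
  variable at k; by induction along i_1, ..., i_n each x_{i_k} is replaced by its exchange
  with respect to the original seed.\<close>

definition skew_symmetrizer :: "('q \<Rightarrow> int) \<Rightarrow> ('q \<Rightarrow> 'q \<Rightarrow> int) \<Rightarrow> bool" where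
  "skew_symmetrizer D M \<longleftrightarrow> (\<forall>i. D i > 0) \<and> (\<forall>i j. D i * M i j = - (D j * M j i))"

lemma skew_symmetrizable_iff_symmetrizer:
  "skew_symmetrizable B \<longleftrightarrow> (\<exists>D. skew_symmetrizer D B)"
  unfolding skew_symmetrizable_def skew_symmetrizer_def ..

lemma opposite_signs_if_skew:
  fixes d e a b :: int
  assumes "d > 0" "e > 0" "d * a = - (e * b)"
  shows "(a > 0 \<longleftrightarrow> b < 0) \<and> (a < 0 \<longleftrightarrow> b > 0)"
proof -
  have "sgn (d * a) = sgn (- (e * b))" using assms(3) by simp
  then have "sgn a = - sgn b" using assms(1,2) by (simp add: sgn_mult)
  then show ?thesis by (auto simp: sgn_if split: if_splits)
qed

lemma mutation_term_eq:
  fixes a b :: int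
  shows "(\<bar>a\<bar> * b + a * \<bar>b\<bar>) div 2 =
    (if a > 0 \<and> b > 0 then a * b else if a < 0 \<and> b < 0 then - (a * b) else 0)"
  by (auto simp: abs_if)

text \<open>The entry (i,j) of a mutation at k changes by the term for a = m_ik, b = m_kj, and the
  entry (j,i) by the term for c = m_jk, d = m_ki.\<close>
lemma skew_mutation_term:
  fixes a b c d di dj dk :: int
  assumes pos: "di > 0" "dj > 0" "dk > 0"
    and ik: "di * a = - (dk * d)" and jk: "dj * c = - (dk * b)"
  shows "di * ((\<bar>a\<bar> * b + a * \<bar>b\<bar>) div 2) = - (dj * ((\<bar>c\<bar> * d + c * \<bar>d\<bar>) div 2))"
proof -
  have "di * (a * b) = (di * a) * b" by (simp only: mult.assoc)
  also have "\<dots> = (dj * c) * d" by (simp add: ik jk)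
  finally have prod: "di * (a * b) = dj * (c * d)" by (simp only: mult.assoc)
  have sa: "a > 0 \<longleftrightarrow> d < 0" "a < 0 \<longleftrightarrow> d > 0" using opposite_signs_if_skew pos(1,3) ik by blast+
  have sc: "c > 0 \<longleftrightarrow> b < 0" "c < 0 \<longleftrightarrow> b > 0" using opposite_signs_if_skew pos(2,3) jk by blast+
  consider "a > 0 \<and> b > 0" | "a < 0 \<and> b < 0" | "\<not> (a > 0 \<and> b > 0) \<and> \<not> (a < 0 \<and> b < 0)" by blast
  then show ?thesis
  proof cases
    case 1
    then have "c < 0 \<and> d < 0" using sa sc by blast
    with 1 show ?thesis unfolding mutation_term_eq by (simp add: prod)
  next
    case 2
    then have "c > 0 \<and> d > 0" using sa sc by blast
    with 2 show ?thesis unfolding mutation_term_eq by (simp add: prod)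
  next
    case 3
    then have "\<not> (c > 0 \<and> d > 0) \<and> \<not> (c < 0 \<and> d < 0)" using sa sc by blast
    with 3 show ?thesis by (simp only: mutation_term_eq if_False)
  qed
qed

lemma skew_symmetrizer_mut_mat:
  assumes "skew_symmetrizer D M"
  shows "skew_symmetrizer D (mut_mat k M)"
  unfolding skew_symmetrizer_def
proof (intro conjI allI)
  fix i j
  have pos: "\<forall>i. D i > 0" and skew: "\<And>i j. D i * M i j = - (D j * M j i)"
    using assms unfolding skew_symmetrizer_def by blast+
  show "D i * mut_mat k M i j = - (D j * mut_mat k M j i)"
  proof (cases "k = i \<or> k = j")
    case True
    then show ?thesis using skew[of i j] by (auto simp: mut_mat_def)
  next
    case False
    have "D i * ((\<bar>M i k\<bar> * M k j + M i k * \<bar>M k j\<bar>) div 2)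
        = - (D j * ((\<bar>M j k\<bar> * M k i + M j k * \<bar>M k i\<bar>) div 2))"
      using pos by (intro skew_mutation_term[where dk = "D k"] skew) auto
    then show ?thesis using False skew[of i j] by (simp add: mut_mat_def distrib_left)
  qed
qed (use assms in \<open>simp add: skew_symmetrizer_def\<close>)

lemma seeds_skew_symmetrizer:
  assumes "S \<in> seeds B" "skew_symmetrizer D B"
  shows "skew_symmetrizer D (fst S)"
  using assms(1) by induction (auto simp: mut_seed_def assms(2) skew_symmetrizer_mut_mat)

lemma skew_symmetrizer_diag_zero:
  assumes "skew_symmetrizer D M"
  shows "M i i = 0"
proof -
  have "D i * M i i = - (D i * M i i)" "D i > 0"
    using assms unfolding skew_symmetrizer_def by blast+
  then show ?thesis by simp
qed

lemma orbit_of_sym: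
  assumes "perm_group G" "i \<in> orbit_of G i0" "j \<in> orbit_of G i0"
  shows "j \<in> orbit_of G i"
proof -
  obtain g h where g: "g \<in> G" "i = g i0" and h: "h \<in> G" "j = h i0"
    using assms(2,3) unfolding orbit_of_def by blast
  have "bij g" "inv g \<in> G" using g assms(1) by (auto simp: perm_group_def)
  then have "h \<circ> inv g \<in> G" "(h \<circ> inv g) i = j"
    using h g assms(1) by (auto simp: perm_group_def bij_def)
  then show ?thesis unfolding orbit_of_def by blast
qed

lemma admissible_orbit_block_zero:
  assumes "skew_symmetrizer D A" "admissible A G" "perm_group G"
    and "i \<in> orbit_of G i0" "j \<in> orbit_of G i0"
  shows "A j i = 0"
proof (cases "i = j")
  case True
  then show ?thesis using skew_symmetrizer_diag_zero assms(1) by metis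
next
  case False
  have "A j i \<le> 0" "A i j \<le> 0"
    using assms(2) orbit_of_sym[OF assms(3)] assms(4,5) False unfolding admissible_def by metis+
  moreover have "(A j i < 0 \<longleftrightarrow> A i j > 0)"
    using assms(1) opposite_signs_if_skew unfolding skew_symmetrizer_def by metis
  ultimately show ?thesis by linarith
qed

definition mut_seq :: "'q::finite list \<Rightarrow> ('q \<Rightarrow> 'q \<Rightarrow> int) \<times> ('q \<Rightarrow> 'a::field)
    \<Rightarrow> ('q \<Rightarrow> 'q \<Rightarrow> int) \<times> ('q \<Rightarrow> 'a)" where
  "mut_seq ks S = foldl (\<lambda>S m. mut_seed m S) S ks"

lemma mut_seq_snoc: "mut_seq (ks @ [k]) S = mut_seed k (mut_seq ks S)"
  by (simp add: mut_seq_def)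

lemma mut_mat_column_unchanged:
  assumes "M k i = 0" "i \<noteq> k"
  shows "mut_mat k M j i = M j i"
  using assms by (auto simp: mut_mat_def)

lemma exch_cong:
  assumes "\<And>j. M j k = M' j k" "\<And>j. M j k \<noteq> 0 \<Longrightarrow> y j = y' j"
  shows "exch M y k = exch M' y' k"
proof -
  have "(\<Prod>j\<in>{j. M j k > 0}. y j ^ nat (M j k)) = (\<Prod>j\<in>{j. M j k > 0}. y' j ^ nat (M j k))"
    "(\<Prod>j\<in>{j. M j k < 0}. y j ^ nat (- M j k)) = (\<Prod>j\<in>{j. M j k < 0}. y' j ^ nat (- M j k))"
    using assms(2) by (auto intro: prod.cong)
  then show ?thesis using assms(1) unfolding exch_def by simp
qed

text \<open>The invariant is stated relative to a vertex set \<Omega> containing the mutated vertices, so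
  that it also tracks the columns of the vertices still to be mutated.\<close>
lemma mut_seq_disconnected:
  assumes block_zero: "\<forall>i\<in>\<Omega>. \<forall>j\<in>\<Omega>. A j i = 0"
    and "distinct ks" "set ks \<subseteq> \<Omega>"
  shows "(\<forall>i\<in>\<Omega> - set ks. \<forall>j. fst (mut_seq ks (A, x)) j i = A j i) \<and>
    snd (mut_seq ks (A, x)) = (\<lambda>i. if i \<in> set ks then exch A x i / x i else x i)"
  using assms(2,3)
proof (induction ks rule: rev_induct)
  case Nil
  then show ?case by (simp add: mut_seq_def)
next
  case (snoc k ks)
  obtain M y where My: "mut_seq ks (A, x) = (M, y)" by fastforce
  have k: "k \<in> \<Omega>" "k \<notin> set ks" using snoc.prems by auto
  have col: "\<forall>i\<in>\<Omega> - set ks. \<forall>j. M j i = A j i"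
    and y: "y = (\<lambda>i. if i \<in> set ks then exch A x i / x i else x i)"
    using snoc by (auto simp: My)
  have "exch M y k = exch A x k"
  proof (rule exch_cong)
    show "M j k = A j k" for j using col k by blast
    show "y j = x j" if "M j k \<noteq> 0" for j
      using that col k block_zero snoc.prems(2) y by auto
  qed
  then have "snd (mut_seq (ks @ [k]) (A, x))
      = (\<lambda>i. if i \<in> set (ks @ [k]) then exch A x i / x i else x i)"
    using k y by (auto simp: mut_seq_snoc My mut_seed_def)
  moreover have "mut_mat k M j i = A j i" if "i \<in> \<Omega> - set (ks @ [k])" for i j
    using that col k block_zero by (subst mut_mat_column_unchanged) auto
  ultimately show ?case by (simp add: mut_seq_snoc My mut_seed_def)
qed

theorem mainTheorem10:
  fixes B A :: "'q::{finite,linorder} \<Rightarrow> 'q \<Rightarrow> int"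
    and G :: "('q \<Rightarrow> 'q) set"
    and x :: "'q \<Rightarrow> 'q ratfun"
    and ks :: "'q list"
  assumes "skew_symmetrizable B"
    and "perm_group G"
    and "G_invariant_seed B G A x"
    and "distinct ks"
    and "\<exists>i0. set ks = orbit_of G i0"
  shows "\<forall>i. (i \<notin> set ks \<longrightarrow> snd (foldl (\<lambda>S m. mut_seed m S) (A, x) ks) i = x i) \<and>
             (\<forall>k < length ks. i = ks ! k \<longrightarrow>
                snd (foldl (\<lambda>S m. mut_seed m S) (A, x) ks) i =
                  ((\<Prod>j\<in>{j. A j (ks ! k) > 0}. x j ^ nat (A j (ks ! k)))
                   + (\<Prod>j\<in>{j. A j (ks ! k) < 0}. x j ^ nat (- A j (ks ! k)))) / x (ks ! k))"
proof -
  obtain D where "skew_symmetrizer D B"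
    using assms(1) skew_symmetrizable_iff_symmetrizer by blast
  then have "skew_symmetrizer D A"
    using seeds_skew_symmetrizer[of "(A, x)"] assms(3) by (auto simp: G_invariant_seed_def)
  moreover have "admissible A G" using assms(3) by (simp add: G_invariant_seed_def)
  moreover obtain i0 where "set ks = orbit_of G i0" using assms(5) by blast
  ultimately have "\<forall>i\<in>set ks. \<forall>j\<in>set ks. A j i = 0"
    using admissible_orbit_block_zero assms(2) by metis
  then have "snd (mut_seq ks (A, x)) = (\<lambda>i. if i \<in> set ks then exch A x i / x i else x i)"
    using mut_seq_disconnected assms(4) by blast
  then show ?thesis by (auto simp: mut_seq_def exch_def)
qed

end
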